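(* Let $1\le k\le n$, $h=\mathcal D_K(x^{\epsilon_k+\epsilon_{-k}})$, $e=\mathcal D_K(x^{2\epsilon_k+\epsilon_{-k}})$, $d^{(\ell)}=\frac1{\ell!}(\mathrm{ad}\,e)^\ell$. For $a\in\mathbb F$ put $F_a=\sum_{r\ge0}\frac1{r!}h_a^{\langle r\rangle}\otimes e^rt^r\in (U(\mathbf K)\otimes U(\mathbf K))[[t]]$ and $u_a=\sum_{r\ge0}\frac{(-1)^r}{r!}h_{-a}^{[r]}e^rt^r\in U(\mathbf K)[[t]]$. Then for every $\alpha\in\mathbb Z^{2n+1}$, $a\in\mathbb F$ and integer $s\ge1$: $$\big(\mathcal D_K(x^\alpha)^s\otimes1\big)F_a=F_{a+s(\alpha_{-k}-\alpha_k)}\big(\mathcal D_K(x^\alpha)^s\otimes1\big),$$ $$\mathcal D_K(x^\alpha)^s\,u_a=u_{a+s(\alpha_k-\alpha_{-k})}\sum_{\ell\ge0}d^{(\ell)}\big(\mathcal D_K(x^\alpha)^s\big)\,h_{1-a}^{\langle\ell\rangle}t^\ell,$$ $$\big(1\otimes\mathcal D_K(x^\alpha)^s\big)F_a=\sum_{\ell\ge0}(-1)^\ell F_{a+\ell}\big(h_a^{\langle\ell\rangle}\otimes d^{(\ell)}(\mathcal D_K(x^\alpha)^s)\big)t^\ell.$$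
   Context: Let $\mathbb F$ be a field of characteristic $0$ and $n\ge1$. Coordinates are indexed by $\{-n,\dots,-1,0,1,\dots,n\}$; $\epsilon_i\in\mathbb Z^{2n+1}$ is the $i$-th unit vector and, for $\alpha\in\mathbb Z^{2n+1}$, $x^\alpha=\prod_i x_i^{\alpha_i}$ in $\mathbb F[x_{-n}^{\pm1},\dots,x_n^{\pm1}]$. Define the derivation $\mathcal D_K(x^\alpha)=\big(2-\sum_{i=1}^n(\alpha_i+\alpha_{-i})\big)x^\alpha\frac{\partial}{\partial x_0}+\sum_{i=1}^n\Big[(\alpha_0x^{\alpha+\epsilon_i-\epsilon_0}+\alpha_{-i}x^{\alpha-\epsilon_{-i}})\frac{\partial}{\partial x_i}+(\alpha_0x^{\alpha+\epsilon_{-i}-\epsilon_0}-\alpha_ix^{\alpha-\epsilon_i})\frac{\partial}{\partial x_{-i}}\Big]$, extended linearly. The generalized Cartan type $K$ Lie algebra $\mathbf K$ is the Lie algebra of derivations (commutator bracket) with basis $\{\mathcal D_K(x^\alpha):\alpha\in\mathbb Z^{2n+1}\}$; explicitly $[\mathcal D_K(x^\alpha),\mathcal D_K(x^\beta)]=\mathcal D_K\Big(\big((2-\sum_{i=1}^n(\alpha_i+\alpha_{-i}))\beta_0-(2-\sum_{i=1}^n(\beta_i+\beta_{-i}))\alpha_0\big)x^{\alpha+\beta-\epsilon_0}+\sum_{i=1}^n(\alpha_{-i}\beta_i-\alpha_i\beta_{-i})x^{\alpha+\beta-\epsilon_i-\epsilon_{-i}}\Big)$. For an element $x$ of a unital algebra,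 a scalar $a$ and $m\ge0$: $x_a^{\langle m\rangle}=(x+a)(x+a+1)\cdots(x+a+m-1)$, $x_a^{[m]}=(x+a)(x+a-1)\cdots(x+a-m+1)$, $x^{\langle m\rangle}=x_0^{\langle m\rangle}$ (empty products $=1$). $\mathrm{ad}\,e(y)=ey-ye$. *)

theory Defs
  imports "HOL-Computational_Algebra.Formal_Power_Series"
begin

(* Multi-indices alpha in Z^{2n+1}, coordinates -n..n, represented as int => int
   vanishing outside [-n,n]. *)
definition Zvec :: "nat \<Rightarrow> (int \<Rightarrow> int) set" where
  "Zvec n = {\<alpha>. \<forall>j. (j < - int n \<or> int n < j) \<longrightarrow> \<alpha> j = 0}"

definition eps :: "int \<Rightarrow> int \<Rightarrow> int" where
  "eps i = (\<lambda>j. if j = i then 1 else 0)"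

definition wK :: "nat \<Rightarrow> (int \<Rightarrow> int) \<Rightarrow> int" where
  "wK n \<alpha> = 2 - (\<Sum>i=1..n. \<alpha> (int i) + \<alpha> (- int i))"

(* sc makes the unital ring 'a an associative unital F-algebra (sc central unital ring hom) *)
definition central_alg_hom :: "('f::field_char_0 \<Rightarrow> 'a::ring_1) \<Rightarrow> bool" where
  "central_alg_hom sc \<longleftrightarrow>
     sc 1 = 1 \<and> (\<forall>x y. sc (x + y) = sc x + sc y) \<and> (\<forall>x y. sc (x * y) = sc x * sc y)
     \<and> (\<forall>x u. sc x * u = u * sc x)"

(* rho gives the images of the basis elements D_K(x^alpha) under a Lie algebra
   homomorphism K -> (A, commutator); the linear extension is a Lie hom iff the
   images satisfy the bracket relations on basis elements. *)
definition K_rep :: "nat \<Rightarrow> ('f::field_char_0 \<Rightarrow> 'a::ring_1) \<Rightarrow> ((int \<Rightarrow> int) \<Rightarrow> 'a) \<Rightarrow> bool" where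
  "K_rep n sc \<rho> \<longleftrightarrow>
    (\<forall>\<alpha>\<in>Zvec n. \<forall>\<beta>\<in>Zvec n.
       \<rho> \<alpha> * \<rho> \<beta> - \<rho> \<beta> * \<rho> \<alpha> =
         sc (of_int (wK n \<alpha> * \<beta> 0 - wK n \<beta> * \<alpha> 0)) * \<rho> (\<lambda>j. \<alpha> j + \<beta> j - eps 0 j)
       + (\<Sum>i=1..n. sc (of_int (\<alpha> (- int i) * \<beta> (int i) - \<alpha> (int i) * \<beta> (- int i)))
                      * \<rho> (\<lambda>j. \<alpha> j + \<beta> j - eps (int i) j - eps (- int i) j)))"

fun rising :: "('f::field_char_0 \<Rightarrow> 'a::ring_1) \<Rightarrow> 'a \<Rightarrow> 'f \<Rightarrow> nat \<Rightarrow> 'a" where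
  "rising sc x a 0 = 1"
| "rising sc x a (Suc m) = rising sc x a m * (x + sc a + of_nat m)"

fun falling :: "('f::field_char_0 \<Rightarrow> 'a::ring_1) \<Rightarrow> 'a \<Rightarrow> 'f \<Rightarrow> nat \<Rightarrow> 'a" where
  "falling sc x a 0 = 1"
| "falling sc x a (Suc m) = falling sc x a m * (x + sc a - of_nat m)"

definition dpow :: "('f::field_char_0 \<Rightarrow> 'a::ring_1) \<Rightarrow> 'a \<Rightarrow> nat \<Rightarrow> 'a \<Rightarrow> 'a" where
  "dpow sc e l y = sc (1 / fact l) * (((\<lambda>z. e * z - z * e) ^^ l) y)"

(* F_a = sum_r (1/r!) h_a^<r> (x) e^r t^r, with h(x)1 -> H, 1(x)e -> E *)
definition Fser :: "('f::field_char_0 \<Rightarrow> 'a::ring_1) \<Rightarrow> 'a \<Rightarrow> 'a \<Rightarrow> 'f \<Rightarrow> 'a fps" where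
  "Fser sc H E a = Abs_fps (\<lambda>r. sc (1 / fact r) * rising sc H a r * E ^ r)"

definition user :: "('f::field_char_0 \<Rightarrow> 'a::ring_1) \<Rightarrow> 'a \<Rightarrow> 'a \<Rightarrow> 'f \<Rightarrow> 'a fps" where
  "user sc H E a = Abs_fps (\<lambda>r. sc ((-1) ^ r / fact r) * falling sc H (- a) r * E ^ r)"

(* the t-adically convergent sum  sum_{l>=0} G_l t^l  of power series G_l *)
definition tsum :: "(nat \<Rightarrow> 'a::ring_1 fps) \<Rightarrow> 'a fps" where
  "tsum G = Abs_fps (\<lambda>m. \<Sum>l\<le>m. fps_nth (G l) (m - l))"

end

theory Submission
  imports Defs
begin

(* The whole proof rests on three facts:
   (i)  ad h acts diagonally on the basis: [h, D_K(x^beta)] = (beta_k - beta_-k) D_K(x^beta),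
        so X = D_K(x^alpha)^s has h-weight mu = s(alpha_k - alpha_-k) and e has weight 1;
   (ii) an element Z of weight mu satisfies Z H = (H - mu) Z, hence moves past the
        Pochhammer products H_a^<r>, H_a^[r] by shifting the parameter a;
   (iii) the Leibniz expansion X E^m = sum_j (-1)^j C(m,j) E^(m-j) (ad E)^j X.  Then the three
   identities are proved coefficientwise for arbitrary H, E, X satisfying the relevant
   weight/commutation hypotheses, and finally the bracket relations of K supply these
   hypotheses for h, e and X. *)

abbreviation ad :: "'a::ring_1 \<Rightarrow> 'a \<Rightarrow> 'a" where
  "ad E \<equiv> (\<lambda>z. E * z - z * E)"

(* Leibniz-type expansion of X E^m in terms of the iterated commutators (ad E)^j X;
   this is what turns a left multiplication by X into the series of d^(l)(X). *)
lemma mult_power_ad_expansion: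
  fixes E X :: "'a::ring_1"
  shows "X * E ^ m = (\<Sum>j\<le>m. of_int ((-1)^j * int (m choose j)) * (E ^ (m - j) * (ad E ^^ j) X))"
proof (induction m)
  case 0 then show ?case by simp
next
  case (Suc m)
  define Y where "Y = (\<lambda>j. (ad E ^^ j) X)"
  define c where "c = (\<lambda>m j. of_int ((-1)^j * int (m choose j)) :: 'a)"
  have YE: "Y j * E = E * Y j - Y (Suc j)" for j by (simp add: Y_def)
  have "X * E ^ Suc m = (X * E ^ m) * E" by (simp add: power_commutes mult.assoc)
  also have "\<dots> = (\<Sum>j\<le>m. c m j * (E ^ (m - j) * (Y j * E)))"
    unfolding Suc c_def Y_def by (simp add: sum_distrib_right mult.assoc)
  also have "\<dots> = (\<Sum>j\<le>m. c m j * (E ^ (Suc m - j) * Y j)) - (\<Sum>j\<le>m. c m j * (E ^ (m - j) * Y (Suc j)))"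
  proof -
    have "c m j * (E ^ (m - j) * (Y j * E)) = c m j * (E ^ (Suc m - j) * Y j) - c m j * (E ^ (m - j) * Y (Suc j))"
      if "j \<le> m" for j
    proof -
      have "E ^ (Suc m - j) = E ^ (m - j) * E" using that by (simp add: Suc_diff_le power_commutes)
      then show ?thesis unfolding YE by (simp add: algebra_simps)
    qed
    then show ?thesis by (simp add: sum_subtractf)
  qed
  also have "(\<Sum>j\<le>m. c m j * (E ^ (Suc m - j) * Y j)) = (\<Sum>j\<le>Suc m. c m j * (E ^ (Suc m - j) * Y j))"
    by (simp add: c_def binomial_eq_0)
  also have "\<dots> = c m 0 * (E ^ Suc m * Y 0) + (\<Sum>i\<le>m. c m (Suc i) * (E ^ (m - i) * Y (Suc i)))"
    by (subst sum.atMost_Suc_shift) simp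
  also have "c m 0 * (E ^ Suc m * Y 0) + (\<Sum>i\<le>m. c m (Suc i) * (E ^ (m - i) * Y (Suc i)))
      - (\<Sum>j\<le>m. c m j * (E ^ (m - j) * Y (Suc j)))
     = c (Suc m) 0 * (E ^ Suc m * Y 0) + (\<Sum>i\<le>m. c (Suc m) (Suc i) * (E ^ (m - i) * Y (Suc i)))"
  proof -
    have "c (Suc m) (Suc i) = c m (Suc i) - c m i" for i by (simp add: c_def algebra_simps)
    then show ?thesis by (simp add: c_def left_diff_distrib sum_subtractf)
  qed
  also have "\<dots> = (\<Sum>j\<le>Suc m. c (Suc m) j * (E ^ (Suc m - j) * Y j))"
    by (subst sum.atMost_Suc_shift) simp
  finally show ?case by (simp add: c_def Y_def)
qed

lemma of_int_move_left: "(x::'a::ring_1) * R * (of_int c * Z) = (x * of_int c) * R * Z"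
proof -
  have "R * (of_int c * Z) = of_int c * (R * Z)"
    by (metis mult.assoc mult_of_int_commute)
  then show ?thesis by (simp only: mult.assoc)
qed

lemma weight_commute: "H * Z - Z * H = c * Z \<Longrightarrow> Z * H = (H - c) * Z"
  for H Z c :: "'a::ring_1"
  by (simp add: algebra_simps)

lemma binomial_over_fact:
  "j \<le> m \<Longrightarrow> (1 / fact m :: 'f::field_char_0) * of_int ((-1)^j * int (m choose j))
      = (-1)^j * (1 / fact (m - j) * (1 / fact j))"
  by (simp add: binomial_fact field_simps)

lemma signed_binomial_over_fact:
  assumes j: "j \<le> m"
  shows "((-1)^m / fact m :: 'f::field_char_0) * of_int ((-1)^j * int (m choose j))
      = (-1)^(m-j) / fact (m - j) * (1 / fact j)"
proof -
  have "(-1::'f)^m * (-1)^j = (-1)^(m-j)"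
  proof -
    have "(-1::'f)^m = (-1)^(m-j) * (-1)^j" using j by (simp add: power_add[symmetric])
    moreover have "(-1::'f)^j * (-1)^j = 1" by (simp flip: power_mult_distrib)
    ultimately show ?thesis by (simp add: mult.assoc)
  qed
  then show ?thesis using j by (simp add: binomial_fact field_simps)
qed

context
  fixes sc :: "'f::field_char_0 \<Rightarrow> 'a::ring_1"
  assumes sc: "central_alg_hom sc"
begin

lemma sc_add: "sc (x + y) = sc x + sc y" using sc unfolding central_alg_hom_def by blast
lemma sc_mult: "sc (x * y) = sc x * sc y" using sc unfolding central_alg_hom_def by blast
lemma sc_one: "sc 1 = 1" using sc unfolding central_alg_hom_def by blast
lemma sc_comm: "sc x * u = u * sc x" using sc unfolding central_alg_hom_def by blast
lemma sc_zero: "sc 0 = 0" using sc_add[of 0 0] by simp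
lemma sc_uminus: "sc (- x) = - sc x"
  using sc_add[of x "-x"] sc_zero by (simp add: add.commute eq_neg_iff_add_eq_0)
lemma sc_diff: "sc (x - y) = sc x - sc y" using sc_add[of x "-y"] sc_uminus by simp
lemma sc_of_nat: "sc (of_nat m) = of_nat m" by (induction m) (simp_all add: sc_zero sc_add sc_one)
lemma sc_of_int: "sc (of_int m) = of_int m"
proof -
  have "m = int (nat m) \<or> m = - int (nat (-m))" by arith
  then show ?thesis by (metis of_int_minus of_int_of_nat_eq sc_of_nat sc_uminus)
qed
lemma sc_power: "sc (x ^ m) = sc x ^ m" by (induction m) (simp_all add: sc_one sc_mult)

lemma sc_move_left: "A * (sc x * B) = sc x * (A * B)"
  by (simp only: mult.assoc[symmetric] sc_comm[of x A])

lemma sc_binomial_over_fact: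
  assumes "j \<le> m"
  shows "sc (1 / fact m) * of_int ((-1)^j * int (m choose j)) = (-1)^j * (sc (1 / fact (m - j)) * sc (1 / fact j))"
proof -
  have "sc (1 / fact m) * of_int ((-1)^j * int (m choose j)) = sc (1 / fact m * of_int ((-1)^j * int (m choose j)))"
    by (simp only: sc_mult sc_of_int)
  also have "\<dots> = sc ((-1)^j * (1 / fact (m - j) * (1 / fact j)))"
    by (simp only: binomial_over_fact[OF assms])
  finally show ?thesis by (simp only: sc_mult sc_power sc_uminus sc_one)
qed

lemma sc_signed_binomial_over_fact:
  assumes "j \<le> m"
  shows "sc ((-1)^m / fact m) * of_int ((-1)^j * int (m choose j)) = sc ((-1)^(m-j) / fact (m - j)) * sc (1 / fact j)"
  by (simp only: sc_of_int[symmetric] sc_mult[symmetric] signed_binomial_over_fact[OF assms])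

lemma weight_mult:
  assumes "H*A - A*H = sc p * A" "H*B - B*H = sc q * B"
  shows "H*(A*B) - (A*B)*H = sc (p+q) * (A*B)"
proof -
  have "H*(A*B) - (A*B)*H = (H*A - A*H)*B + A*(H*B - B*H)" by (simp add: algebra_simps)
  also have "\<dots> = sc p * A * B + A * (sc q * B)" using assms by simp
  also have "A * (sc q * B) = sc q * (A * B)" by (rule sc_move_left)
  also have "sc p * A * B + sc q * (A * B) = sc (p+q) * (A*B)" by (simp add: sc_add algebra_simps)
  finally show ?thesis .
qed

lemma weight_power:
  assumes "H*X - X*H = sc \<nu> * X"
  shows "H*X^s - X^s*H = sc (of_nat s * \<nu>) * X^s"
proof (induction s)
  case 0 then show ?case by (simp add: sc_zero)
next
  case (Suc s)
  have "H*(X*X^s) - (X*X^s)*H = sc (\<nu> + of_nat s * \<nu>) * (X*X^s)" by (rule weight_mult[OF assms Suc])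
  moreover have "\<nu> + of_nat s * \<nu> = of_nat (Suc s) * \<nu>" by (simp add: algebra_simps)
  ultimately show ?case by (simp only: power_Suc)
qed

lemma weight_ad_power:
  assumes e: "H*E - E*H = E" and x: "H*X - X*H = sc \<mu> * X"
  shows "H*(ad E ^^ j) X - (ad E ^^ j) X*H = sc (\<mu> + of_nat j) * (ad E ^^ j) X"
proof (induction j)
  case 0 then show ?case using x by simp
next
  case (Suc j)
  define Y where "Y = (ad E ^^ j) X"
  have e1: "H*E - E*H = sc 1 * E" using e by (simp add: sc_one)
  have EY: "H*(E*Y) - (E*Y)*H = sc (1 + (\<mu> + of_nat j)) * (E*Y)"
    using weight_mult[OF e1 Suc[folded Y_def]] .
  have YE: "H*(Y*E) - (Y*E)*H = sc ((\<mu> + of_nat j) + 1) * (Y*E)"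
    using weight_mult[OF Suc[folded Y_def] e1] .
  have "H*(E*Y - Y*E) - (E*Y - Y*E)*H = (H*(E*Y) - (E*Y)*H) - (H*(Y*E) - (Y*E)*H)"
    by (simp add: algebra_simps)
  also have "\<dots> = sc (\<mu> + of_nat (Suc j)) * (E*Y - Y*E)" unfolding EY YE by (simp add: algebra_simps)
  finally show ?case by (simp add: Y_def)
qed

lemma weight_E_power:
  assumes "H*E - E*H = E" shows "H*E^i - E^i*H = sc (of_nat i) * E^i"
proof (induction i)
  case 0 then show ?case by (simp add: sc_zero)
next
  case (Suc i)
  have e: "H*E - E*H = sc 1 * E" using assms by (simp add: sc_one)
  show ?case using weight_mult[OF e Suc] by (simp add: add.commute)
qed

lemma rising_commute: "y * H = H * y \<Longrightarrow> y * rising sc H a l = rising sc H a l * y"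
proof (induction l)
  case (Suc l)
  have "y * rising sc H a (Suc l) = rising sc H a l * (y * (H + sc a + of_nat l))"
    using Suc by (simp add: mult.assoc[symmetric])
  also have "y * (H + sc a + of_nat l) = (H + sc a + of_nat l) * y"
    using Suc.prems by (simp add: distrib_left distrib_right sc_comm mult_of_nat_commute)
  finally show ?case by (simp add: mult.assoc)
qed simp

lemma rising_shift:
  assumes "X * H = (H - sc \<mu>) * X"
  shows "X * rising sc H a r = rising sc H (a - \<mu>) r * X"
proof (induction r)
  case (Suc r)
  have "X * rising sc H a (Suc r) = rising sc H (a - \<mu>) r * (X * (H + sc a + of_nat r))"
    using Suc by (simp add: mult.assoc[symmetric])
  also have "X * (H + sc a + of_nat r) = (H + sc (a - \<mu>) + of_nat r) * X"
    using assms by (simp add: distrib_left distrib_right left_diff_distrib sc_diff sc_comm mult_of_nat_commute)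
  finally show ?case by (simp add: mult.assoc)
qed simp

lemma falling_shift:
  assumes "X * H = (H - sc \<mu>) * X"
  shows "X * falling sc H a r = falling sc H (a - \<mu>) r * X"
proof (induction r)
  case (Suc r)
  have "X * falling sc H a (Suc r) = falling sc H (a - \<mu>) r * (X * (H + sc a - of_nat r))"
    using Suc by (simp add: mult.assoc[symmetric])
  also have "X * (H + sc a - of_nat r) = (H + sc (a - \<mu>) - of_nat r) * X"
    using assms
    by (simp add: distrib_left distrib_right left_diff_distrib right_diff_distrib sc_diff sc_comm mult_of_nat_commute)
  finally show ?case by (simp add: mult.assoc)
qed simp

lemma rising_add: "rising sc H a (l + j) = rising sc H a l * rising sc H (a + of_nat l) j"
  by (induction j) (simp_all add: sc_add sc_of_nat mult.assoc add.assoc)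

lemma rising_Suc_left: "rising sc H c (Suc j) = (H + sc c) * rising sc H (c + 1) j"
proof (induction j)
  case 0 then show ?case by simp
next
  case (Suc j)
  have "rising sc H c (Suc (Suc j)) = (H + sc c) * rising sc H (c + 1) j * (H + sc c + of_nat (Suc j))"
    using Suc by (simp only: rising.simps)
  also have "H + sc c + of_nat (Suc j) = H + sc (c + 1) + of_nat j"
    by (simp add: sc_add sc_one)
  finally show ?case by (simp only: rising.simps mult.assoc)
qed

lemma falling_split:
  "falling sc H b (k + j) = falling sc H b k * rising sc H (b - of_nat (k + j) + 1) j"
proof (induction j)
  case (Suc j)
  define c where "c = b - of_nat (k + j)"
  have c_comm: "rising sc H (c + 1) j * (H + sc c) = (H + sc c) * rising sc H (c + 1) j"
    by (rule rising_commute[symmetric]) (simp add: distrib_left distrib_right sc_comm)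
  have last_factor: "H + sc b - of_nat (k+j) = H + sc c"
    by (simp only: c_def sc_diff sc_of_nat add_diff_eq)
  have "falling sc H b (k + Suc j) = falling sc H b (k + j) * (H + sc b - of_nat (k+j))"
    by (simp only: add_Suc_right falling.simps)
  also have "\<dots> = falling sc H b k * (rising sc H (c + 1) j * (H + sc c))"
    by (simp only: last_factor Suc.IH[folded c_def] mult.assoc)
  also have "\<dots> = falling sc H b k * rising sc H (b - of_nat (k + Suc j) + 1) (Suc j)"
    unfolding c_comm rising_Suc_left by (simp add: c_def algebra_simps)
  finally show ?case .
qed simp

lemma Fser_weight_commute:
  assumes XE: "X * E = E * X" and XH: "X * H = (H - sc \<mu>) * X"
  shows "fps_const X * Fser sc H E a = Fser sc H E (a - \<mu>) * fps_const X"
proof (rule fps_ext)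
  fix r
  have XEr: "X * E ^ r = E ^ r * X" using XE by (metis power_commuting_commutes)
  have "X * (sc (1 / fact r) * rising sc H a r * E ^ r) = sc (1 / fact r) * (X * rising sc H a r) * E ^ r"
    by (simp only: mult.assoc sc_move_left[of _ "1 / fact r"])
  also have "\<dots> = sc (1 / fact r) * rising sc H (a - \<mu>) r * E ^ r * X"
    by (simp add: rising_shift[OF XH] XEr mult.assoc)
  finally show "fps_nth (fps_const X * Fser sc H E a) r = fps_nth (Fser sc H E (a - \<mu>) * fps_const X) r"
    by (simp only: Fser_def fps_mult_left_const_nth fps_mult_right_const_nth fps_nth_Abs_fps mult.assoc)
qed

(* Identity 2, one term of the convolution: the j-th term of the expansion of
   X (coefficient m of u_a) equals the product of coefficient m-j of u_(a+mu) and
   coefficient j of the series of d^(j)(X) H_(1-a)^<j>. *)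
lemma user_term:
  assumes HE: "H*E - E*H = E" and HX: "H*X - X*H = sc \<mu> * X" and j: "j \<le> m"
  shows "(sc ((-1)^m / fact m) * of_int ((-1)^j * int (m choose j))) * falling sc H (- (a + \<mu>)) m
           * (E ^ (m - j) * (ad E ^^ j) X)
       = (sc ((-1)^(m-j) / fact (m-j)) * falling sc H (- (a + \<mu>)) (m-j) * E ^ (m-j))
           * (sc (1 / fact j) * (ad E ^^ j) X * rising sc H (1 - a) j)"
proof -
  define b where "b = - (a + \<mu>)"
  define Z where "Z = E ^ (m - j) * (ad E ^^ j) X"
  have Z_weight: "H*Z - Z*H = sc (of_nat (m - j) + (\<mu> + of_nat j)) * Z"
    unfolding Z_def by (rule weight_mult[OF weight_E_power[OF HE] weight_ad_power[OF HE HX]])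
  have shifted: "1 - a - (of_nat (m - j) + (\<mu> + of_nat j)) = b - of_nat (m - j + j) + 1"
    using j by (simp add: b_def of_nat_diff algebra_simps)
  have Z_rising: "Z * rising sc H (1 - a) j = rising sc H (b - of_nat (m - j + j) + 1) j * Z"
    using rising_shift[OF weight_commute[OF Z_weight], of "1 - a" j] unfolding shifted .
  have falling_m: "falling sc H b m = falling sc H b (m - j) * rising sc H (b - of_nat (m - j + j) + 1) j"
    using falling_split[of H b "m - j" j] j by simp
  have "(sc ((-1)^(m-j) / fact (m-j)) * falling sc H b (m-j) * E ^ (m-j))
          * (sc (1 / fact j) * (ad E ^^ j) X * rising sc H (1 - a) j)
      = sc ((-1)^(m-j) / fact (m-j)) * sc (1 / fact j) * falling sc H b (m-j) * (Z * rising sc H (1 - a) j)"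
    unfolding Z_def by (simp only: mult.assoc sc_move_left[of _ "1 / fact j"])
  also have "\<dots> = sc ((-1)^(m-j) / fact (m-j)) * sc (1 / fact j) * falling sc H b m * Z"
    unfolding Z_rising falling_m by (simp add: mult.assoc)
  finally show ?thesis
    unfolding sc_signed_binomial_over_fact[OF j] Z_def b_def by simp
qed

lemma user_weight_commute:
  assumes HE: "H*E - E*H = E" and HX: "H*X - X*H = sc \<mu> * X"
  shows "fps_const X * user sc H E a
       = user sc H E (a + \<mu>) * Abs_fps (\<lambda>l. dpow sc E l X * rising sc H (1 - a) l)"
proof (rule fps_ext)
  fix m
  define F where "F = falling sc H (- (a + \<mu>))"
  define T where "T = (\<lambda>j. sc (1 / fact j) * (ad E ^^ j) X * rising sc H (1 - a) j)"
  have X_falling: "X * falling sc H (-a) m = F m * X"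
    unfolding F_def using falling_shift[OF weight_commute[OF HX], of "-a" m] by simp
  have "fps_nth (fps_const X * user sc H E a) m = X * (sc ((-1)^m / fact m) * falling sc H (-a) m * E ^ m)"
    by (simp only: user_def fps_mult_left_const_nth fps_nth_Abs_fps)
  also have "\<dots> = sc ((-1)^m / fact m) * F m * (X * E ^ m)"
    by (simp only: mult.assoc sc_move_left[of _ "(-1)^m / fact m"]) (simp only: X_falling mult.assoc[symmetric])
  also have "\<dots> = (\<Sum>j\<le>m. (sc ((-1)^m / fact m) * of_int ((-1)^j * int (m choose j))) * F m
                        * (E ^ (m - j) * (ad E ^^ j) X))"
    unfolding mult_power_ad_expansion sum_distrib_left by (rule sum.cong[OF refl]) (rule of_int_move_left)
  also have "\<dots> = (\<Sum>j=0..m. (sc ((-1)^(m-j) / fact (m-j)) * F (m-j) * E ^ (m-j)) * T j)"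
    unfolding atLeast0AtMost[symmetric] F_def T_def
    by (rule sum.cong[OF refl]) (rule user_term[OF HE HX], simp)
  also have "\<dots> = (\<Sum>i=0..m. (sc ((-1)^i / fact i) * F i * E ^ i) * T (m - i))"
    by (subst sum.atLeastAtMost_rev) (rule sum.cong[OF refl], simp)
  also have "\<dots> = fps_nth (user sc H E (a + \<mu>) * Abs_fps (\<lambda>l. dpow sc E l X * rising sc H (1 - a) l)) m"
    by (simp only: fps_mult_nth user_def fps_nth_Abs_fps dpow_def F_def T_def mult.assoc)
  finally show "fps_nth (fps_const X * user sc H E a) m
      = fps_nth (user sc H E (a + \<mu>) * Abs_fps (\<lambda>l. dpow sc E l X * rising sc H (1 - a) l)) m" .
qed

lemma Fser_term:
  assumes HE: "H * E = E * H" and l: "l \<le> m"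
  shows "(sc (1 / fact m) * of_int ((-1)^l * int (m choose l))) * rising sc H a m * (E ^ (m - l) * Y)
       = (-1)^l * (sc (1 / fact (m - l)) * rising sc H (a + of_nat l) (m - l) * E ^ (m - l))
           * (rising sc H a l * (sc (1 / fact l) * Y))"
proof -
  define R where "R = rising sc H"
  have R_m: "R a m = R a l * R (a + of_nat l) (m - l)"
    using rising_add[of H a l "m - l"] l by (simp add: R_def)
  have "H * E ^ (m - l) = E ^ (m - l) * H" using HE by (metis power_commuting_commutes)
  then have E_R: "E ^ (m - l) * R a l = R a l * E ^ (m - l)"
    using rising_commute by (simp add: R_def)
  have "rising sc H a l * H = H * rising sc H a l" using rising_commute[of H H a l] by simp
  then have R_R: "R (a + of_nat l) (m - l) * R a l = R a l * R (a + of_nat l) (m - l)"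
    unfolding R_def by (rule rising_commute[symmetric])
  have "(-1)^l * (sc (1 / fact (m - l)) * R (a + of_nat l) (m - l) * E ^ (m - l)) * (R a l * (sc (1 / fact l) * Y))
      = (-1)^l * sc (1 / fact (m - l)) * sc (1 / fact l) * (R (a + of_nat l) (m - l) * (E ^ (m - l) * R a l)) * Y"
    by (simp only: mult.assoc sc_move_left[of _ "1 / fact l"])
  also have "\<dots> = (-1)^l * sc (1 / fact (m - l)) * sc (1 / fact l) * R a m * (E ^ (m - l) * Y)"
    unfolding E_R mult.assoc[symmetric] R_R R_m by (simp add: mult.assoc)
  finally show ?thesis
    unfolding sc_binomial_over_fact[OF l] R_def by (simp add: mult.assoc)
qed

lemma Fser_second_factor_commute:
  assumes HE: "H * E = E * H" and XH: "X * H = H * X"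
  shows "fps_const X * Fser sc H E a
       = tsum (\<lambda>l. fps_const ((-1)^l) * Fser sc H E (a + of_nat l) * fps_const (rising sc H a l * dpow sc E l X))"
proof (rule fps_ext)
  fix m
  have "X * (sc (1 / fact m) * rising sc H a m * E ^ m) = sc (1 / fact m) * rising sc H a m * (X * E ^ m)"
    by (simp only: mult.assoc sc_move_left[of _ "1 / fact m"])
      (simp only: mult.assoc[symmetric] rising_commute[OF XH])
  also have "\<dots> = (\<Sum>j\<le>m. (sc (1 / fact m) * of_int ((-1)^j * int (m choose j))) * rising sc H a m
                        * (E ^ (m - j) * (ad E ^^ j) X))"
    unfolding mult_power_ad_expansion sum_distrib_left by (rule sum.cong[OF refl]) (rule of_int_move_left)
  also have "\<dots> = (\<Sum>l\<le>m. (-1)^l * (sc (1 / fact (m - l)) * rising sc H (a + of_nat l) (m - l) * E ^ (m - l))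
                        * (rising sc H a l * (sc (1 / fact l) * (ad E ^^ l) X)))"
    by (rule sum.cong[OF refl]) (rule Fser_term[OF HE], simp)
  finally show "fps_nth (fps_const X * Fser sc H E a) m
      = fps_nth (tsum (\<lambda>l. fps_const ((-1)^l) * Fser sc H E (a + of_nat l)
                            * fps_const (rising sc H a l * dpow sc E l X))) m"
    by (simp only: tsum_def Fser_def dpow_def fps_mult_left_const_nth fps_mult_right_const_nth fps_nth_Abs_fps)
qed

end

lemma h_vector_in_Zvec: "k \<le> n \<Longrightarrow> (\<lambda>j. eps (int k) j + eps (- int k) j) \<in> Zvec n"
  by (auto simp: Zvec_def eps_def)

lemma e_vector_in_Zvec: "k \<le> n \<Longrightarrow> (\<lambda>j. 2 * eps (int k) j + eps (- int k) j) \<in> Zvec n"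
  by (auto simp: Zvec_def eps_def)

lemma wK_h_vector:
  assumes "1 \<le> k" "k \<le> n"
  shows "wK n (\<lambda>j. eps (int k) j + eps (- int k) j) = 0"
proof -
  have "(\<Sum>i=1..n. (eps (int k) (int i) + eps (- int k) (int i)) + (eps (int k) (- int i) + eps (- int k) (- int i)))
      = (\<Sum>i=1..n. if i = k then 2 else 0)"
    using assms by (intro sum.cong) (auto simp: eps_def)
  also have "\<dots> = 2" using assms by simp
  finally show ?thesis by (simp add: wK_def)
qed

(* In the
   bracket formula the eps_0-term vanishes because wK h = 0 = h_0, and of the sum only
   the term i = k survives, with coefficient beta_k - beta_-k and index beta. *)
lemma K_rep_h_weight:
  assumes K: "K_rep n sc \<rho>" and sc: "central_alg_hom sc"
    and k: "1 \<le> k" "k \<le> n" and b: "\<beta> \<in> Zvec n"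
  defines "h \<equiv> \<rho> (\<lambda>j. eps (int k) j + eps (- int k) j)"
  shows "h * \<rho> \<beta> - \<rho> \<beta> * h = sc (of_int (\<beta> (int k) - \<beta> (- int k))) * \<rho> \<beta>"
proof -
  define hv where "hv = (\<lambda>j. eps (int k) j + eps (- int k) j)"
  have hv_pm: "hv (int i) = (if i = k then 1 else 0)" "hv (- int i) = (if i = k then 1 else 0)"
    if "1 \<le> i" for i using that k by (auto simp: hv_def eps_def)
  have "h * \<rho> \<beta> - \<rho> \<beta> * h =
         sc (of_int (wK n hv * \<beta> 0 - wK n \<beta> * hv 0)) * \<rho> (\<lambda>j. hv j + \<beta> j - eps 0 j)
       + (\<Sum>i=1..n. sc (of_int (hv (- int i) * \<beta> (int i) - hv (int i) * \<beta> (- int i)))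
                      * \<rho> (\<lambda>j. hv j + \<beta> j - eps (int i) j - eps (- int i) j))"
    using K h_vector_in_Zvec[OF k(2)] b unfolding K_rep_def h_def hv_def by blast
  also have "sc (of_int (wK n hv * \<beta> 0 - wK n \<beta> * hv 0)) = 0"
    using wK_h_vector[OF k] k by (simp add: hv_def eps_def sc_zero[OF sc])
  also have "(\<Sum>i=1..n. sc (of_int (hv (- int i) * \<beta> (int i) - hv (int i) * \<beta> (- int i)))
                      * \<rho> (\<lambda>j. hv j + \<beta> j - eps (int i) j - eps (- int i) j))
     = (\<Sum>i=1..n. if i = k then sc (of_int (\<beta> (int k) - \<beta> (- int k))) * \<rho> \<beta> else 0)"
  proof (rule sum.cong[OF refl])
    fix i assume "i \<in> {1..n}"
    moreover have "(\<lambda>j. hv j + \<beta> j - eps (int k) j - eps (- int k) j) = \<beta>"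
      by (auto simp: hv_def)
    ultimately show "sc (of_int (hv (- int i) * \<beta> (int i) - hv (int i) * \<beta> (- int i)))
                      * \<rho> (\<lambda>j. hv j + \<beta> j - eps (int i) j - eps (- int i) j)
      = (if i = k then sc (of_int (\<beta> (int k) - \<beta> (- int k))) * \<rho> \<beta> else 0)"
      using hv_pm by (auto simp: sc_zero[OF sc])
  qed
  also have "\<dots> = sc (of_int (\<beta> (int k) - \<beta> (- int k))) * \<rho> \<beta>" using k by simp
  finally show ?thesis by simp
qed

theorem lemma3p3:
  fixes n k :: nat and sc :: "'f::field_char_0 \<Rightarrow> 'a::ring_1"
    and \<rho>1 \<rho>2 :: "(int \<Rightarrow> int) \<Rightarrow> 'a"
    and \<alpha> :: "int \<Rightarrow> int" and a :: 'f and s :: nat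
  assumes "1 \<le> k" and "k \<le> n"
    and "central_alg_hom sc"
    and "K_rep n sc \<rho>1" and "K_rep n sc \<rho>2"
    and "\<forall>\<beta>\<in>Zvec n. \<forall>\<gamma>\<in>Zvec n. \<rho>1 \<beta> * \<rho>2 \<gamma> = \<rho>2 \<gamma> * \<rho>1 \<beta>"
    and "\<alpha> \<in> Zvec n" and "1 \<le> s"
  shows
   "(let h1 = \<rho>1 (\<lambda>j. eps (int k) j + eps (- int k) j);
         e1 = \<rho>1 (\<lambda>j. 2 * eps (int k) j + eps (- int k) j);
         e2 = \<rho>2 (\<lambda>j. 2 * eps (int k) j + eps (- int k) j);
         X1 = \<rho>1 \<alpha> ^ s; X2 = \<rho>2 \<alpha> ^ s
     in fps_const X1 * Fser sc h1 e2 a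
          = Fser sc h1 e2 (a + of_nat s * of_int (\<alpha> (- int k) - \<alpha> (int k))) * fps_const X1
      \<and> fps_const X1 * user sc h1 e1 a
          = user sc h1 e1 (a + of_nat s * of_int (\<alpha> (int k) - \<alpha> (- int k)))
            * Abs_fps (\<lambda>l. dpow sc e1 l X1 * rising sc h1 (1 - a) l)
      \<and> fps_const X2 * Fser sc h1 e2 a
          = tsum (\<lambda>l. fps_const ((-1) ^ l) * Fser sc h1 e2 (a + of_nat l)
                        * fps_const (rising sc h1 a l * dpow sc e2 l X2)))"
proof -
  note k = assms(1,2) and sc = assms(3) and K1 = assms(4) and commute = assms(6) and \<alpha> = assms(7)
  define hv where "hv = (\<lambda>j. eps (int k) j + eps (- int k) j)"
  define ev where "ev = (\<lambda>j. 2 * eps (int k) j + eps (- int k) j)"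
  define \<mu> :: 'f where "\<mu> = of_nat s * of_int (\<alpha> (int k) - \<alpha> (- int k))"
  have hv: "hv \<in> Zvec n" and ev: "ev \<in> Zvec n"
    unfolding hv_def ev_def using h_vector_in_Zvec e_vector_in_Zvec k(2) by blast+
  have X1_weight: "\<rho>1 hv * \<rho>1 \<alpha> ^ s - \<rho>1 \<alpha> ^ s * \<rho>1 hv = sc \<mu> * \<rho>1 \<alpha> ^ s"
    unfolding \<mu>_def by (rule weight_power[OF sc K_rep_h_weight[OF K1 sc k \<alpha>, folded hv_def]])
  have "\<rho>1 hv * \<rho>1 ev - \<rho>1 ev * \<rho>1 hv = sc (of_int (ev (int k) - ev (- int k))) * \<rho>1 ev"
    using K_rep_h_weight[OF K1 sc k ev] by (simp add: hv_def)
  then have e1_weight: "\<rho>1 hv * \<rho>1 ev - \<rho>1 ev * \<rho>1 hv = \<rho>1 ev"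
    using k by (simp add: ev_def eps_def sc_one[OF sc])
  have X1_e2: "\<rho>1 \<alpha> ^ s * \<rho>2 ev = \<rho>2 ev * \<rho>1 \<alpha> ^ s"
    using commute \<alpha> ev by (metis power_commuting_commutes)
  have h1_e2: "\<rho>1 hv * \<rho>2 ev = \<rho>2 ev * \<rho>1 hv" using commute hv ev by blast
  have X2_h1: "\<rho>2 \<alpha> ^ s * \<rho>1 hv = \<rho>1 hv * \<rho>2 \<alpha> ^ s"
    using commute \<alpha> hv by (metis power_commuting_commutes)
  have shift: "a - \<mu> = a + of_nat s * of_int (\<alpha> (- int k) - \<alpha> (int k))"
    by (simp add: \<mu>_def algebra_simps)
  show ?thesis
    using Fser_weight_commute[OF sc X1_e2 weight_commute[OF X1_weight], of a, unfolded shift]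
      user_weight_commute[OF sc e1_weight X1_weight, of a]
      Fser_second_factor_commute[OF sc h1_e2 X2_h1, of a]
    unfolding Let_def hv_def ev_def \<mu>_def by blast
qed

end
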